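(* Let $S=\{(x_i,y_i)\}_{i=1}^n$ be a training set, $\{f_\theta\}$ a parameterized family of classifiers, and $\hat\theta\in\arg\min_\theta L_{\textrm{close-}1}(\{\ell(y_i,f_\theta(x_i))\}_{i=1}^n)$. Then $$\min_\theta L_{0-1}(\{(y_i,f_\theta(x_i))\}_{i=1}^n)=L_{0-1}(\hat\theta),$$ where $L_{0-1}(\theta)$ denotes the number of training examples misclassified by $f_\theta$.
   Context: Binary classification with labels $y\in\{-1,+1\}$ and real-valued predictions. An individual loss $\ell(y,f(x))\ge 0$ comes with a threshold $T$ such that an example is correctly classified iff its individual loss is below $T$. Given individual losses $\ell_1,\dots,\ell_n$, let $\ell_{[i]}$ be the individual loss with the $i$-th smallest value of $|\ell_j-T|$. For a constant $M$ at least as large as every individual loss that occurs, the close-$k$ aggregate loss is $L_{\textrm{close-}k}(\{\ell_i\})=\sum_{i=1}^n c_i$ with $c_i=\ell_{[i]}$ if $i\le k$, $c_i=0$ if $i>k$ and $\ell_{[i]}$ is correctly classified, and $c_i=M$ if $i>k$ and $\ell_{[i]}$ is incorrectly classified; here $k=1$. *)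

theory Defs
  imports Complex_Main
begin

definition close_order :: "real \<Rightarrow> real list \<Rightarrow> real list" where
  "close_order T ls = sort_key (\<lambda>l. \<bar>l - T\<bar>) ls"

(* close-k aggregate loss: the k losses closest to T contribute themselves;
   each remaining loss contributes 0 if correctly classified (l < T), else M. *)
definition close_k_loss :: "nat \<Rightarrow> real \<Rightarrow> real \<Rightarrow> real list \<Rightarrow> real" where
  "close_k_loss k T M ls =
     (let s = close_order T ls in
        sum_list (take k s) + sum_list (map (\<lambda>l. if l < T then 0 else M) (drop k s)))"

definition correctly_classified :: "real \<Rightarrow> real \<Rightarrow> bool" where
  "correctly_classified y z \<longleftrightarrow> y * z > 0"

definition zero_one_loss :: "('x \<times> real) list \<Rightarrow> ('x \<Rightarrow> real) \<Rightarrow> nat" where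
  "zero_one_loss S f = length (filter (\<lambda>(x, y). \<not> correctly_classified y (f x)) S)"

definition losses :: "(real \<Rightarrow> real \<Rightarrow> real) \<Rightarrow> ('x \<times> real) list \<Rightarrow> ('x \<Rightarrow> real) \<Rightarrow> real list" where
  "losses loss S f = map (\<lambda>(x, y). loss y (f x)) S"

end

theory Submission
  imports Defs "HOL-Library.Multiset"
begin

text \<open>In the close-1 loss only the loss ranked first keeps its own value h; every other loss
  contributes M if misclassified and 0 otherwise. Hence it equals M times the number m of
  misclassified examples plus a correction, h or h - M, lying in [T - M, T) once 0 < T \<le> M.
  These windows for different m do not overlap, so fewer errors always give a strictly smaller
  close-1 loss, and a minimiser of the close-1 loss minimises the 0-1 loss. The conditions
  0 < T \<le> M are automatic when two error counts differ: the smaller count leaves a loss in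
  [0, T), the larger one produces a loss in [T, M].\<close>

lemma sum_list_map_misclassified:
  fixes T M :: real
  shows "sum_list (map (\<lambda>l. if l < T then 0 else M) ls) = M * real (length (filter (\<lambda>l. T \<le> l) ls))"
  by (induction ls) (auto simp: algebra_simps)

lemma close_1_loss_eq:
  assumes "ls \<noteq> []"
  obtains h where "h \<in> set ls"
    and "close_k_loss 1 T M ls = (if h < T then h else h - M) + M * real (length (filter (\<lambda>l. T \<le> l) ls))"
proof -
  define s where "s = close_order T ls"
  have mset_s: "mset s = mset ls"
    unfolding s_def close_order_def by simp
  then obtain h t where s: "s = h # t"
    using assms by (cases s) auto
  have "h \<in> set ls"
    using mset_s s by (metis list.set_intros(1) set_mset_mset)
  moreover have "close_k_loss 1 T M ls = h + sum_list (map (\<lambda>l. if l < T then 0 else M) t)"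
    unfolding close_k_loss_def s_def[symmetric] Let_def s by simp
  moreover have "M * real (length (filter (\<lambda>l. T \<le> l) ls))
      = (if h < T then 0 else M) + sum_list (map (\<lambda>l. if l < T then 0 else M) t)"
    by (metis mset_s mset_filter size_mset s sum_list_map_misclassified list.map(2) sum_list.Cons)
  ultimately show thesis
    using that by (simp split: if_splits)
qed

lemma close_1_loss_less_if_fewer_misclassified:
  fixes ls ls' :: "real list"
  assumes same_length: "length ls' = length ls"
    and bounded: "set ls \<subseteq> {0..M}" "set ls' \<subseteq> {0..M}"
    and fewer: "length (filter (\<lambda>l. T \<le> l) ls') < length (filter (\<lambda>l. T \<le> l) ls)"
  shows "close_k_loss 1 T M ls' < close_k_loss 1 T M ls"
proof -
  let ?n = "\<lambda>ls. real (length (filter (\<lambda>l. T \<le> l) ls))"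
  have "\<not> (\<forall>l\<in>set ls'. T \<le> l)"
    using fewer same_length length_filter_le[of _ ls] by (metis filter_True not_le)
  then obtain l' where "l' \<in> set ls'" "l' < T"
    by auto
  with bounded have T_pos: "0 < T" and "ls' \<noteq> []"
    by auto
  obtain l where "l \<in> set ls" "T \<le> l"
    using fewer by (metis filter_False length_0_conv less_zeroE)
  with bounded have T_le_M: "T \<le> M" and "ls \<noteq> []"
    by auto
  obtain h' where "h' \<in> set ls'"
    and h': "close_k_loss 1 T M ls' = (if h' < T then h' else h' - M) + M * ?n ls'"
    using close_1_loss_eq[OF \<open>ls' \<noteq> []\<close>] .
  with bounded T_pos have "close_k_loss 1 T M ls' < M * ?n ls' + T"
    by (auto split: if_splits)
  also have "\<dots> \<le> M * ?n ls + T - M"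
  proof -
    have "?n ls' + 1 \<le> ?n ls"
      using fewer by simp
    then have "M * (?n ls' + 1) \<le> M * ?n ls"
      using T_pos T_le_M by (intro mult_left_mono) auto
    then show ?thesis
      by (simp add: algebra_simps)
  qed
  also obtain h where "h \<in> set ls"
    and h: "close_k_loss 1 T M ls = (if h < T then h else h - M) + M * ?n ls"
    using close_1_loss_eq[OF \<open>ls \<noteq> []\<close>] .
  with bounded T_le_M have "M * ?n ls + T - M \<le> close_k_loss 1 T M ls"
    by (auto split: if_splits)
  finally show ?thesis .
qed

lemma length_filter_losses_eq_zero_one_loss:
  assumes labels: "\<forall>(x, y) \<in> set S. y \<in> {-1, 1}"
    and threshold: "\<forall>y \<in> {-1, 1}. \<forall>z. loss y z < T \<longleftrightarrow> correctly_classified y z"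
  shows "length (filter (\<lambda>l. T \<le> l) (losses loss S g)) = zero_one_loss S g"
proof -
  have "T \<le> loss y (g x) \<longleftrightarrow> \<not> correctly_classified y (g x)" if "(x, y) \<in> set S" for x y
  proof -
    have "y \<in> {-1, 1}"
      using labels that by auto
    with threshold show ?thesis
      by (meson not_less)
  qed
  then have "filter (\<lambda>l. T \<le> l) (losses loss S g)
      = map (\<lambda>(x, y). loss y (g x)) (filter (\<lambda>(x, y). \<not> correctly_classified y (g x)) S)"
    unfolding losses_def filter_map by (auto intro!: arg_cong[where f = "map _"] filter_cong)
  then show ?thesis
    unfolding zero_one_loss_def by simp
qed

theorem lemma4:
  fixes S :: "('x \<times> real) list"
    and f :: "'p \<Rightarrow> 'x \<Rightarrow> real"
    and loss :: "real \<Rightarrow> real \<Rightarrow> real"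
    and T M :: real
    and \<theta>h :: 'p
  assumes labels: "\<forall>(x, y) \<in> set S. y \<in> {-1, 1}"
    and nonneg: "\<forall>y z. loss y z \<ge> 0"
    and threshold: "\<forall>y \<in> {-1, 1}. \<forall>z. loss y z < T \<longleftrightarrow> correctly_classified y z"
    and M_bound: "\<forall>\<theta>. \<forall>(x, y) \<in> set S. loss y (f \<theta> x) \<le> M"
    and argmin: "\<forall>\<theta>. close_k_loss 1 T M (losses loss S (f \<theta>h))
                      \<le> close_k_loss 1 T M (losses loss S (f \<theta>))"
  shows "(INF \<theta>. zero_one_loss S (f \<theta>)) = zero_one_loss S (f \<theta>h)"
proof (rule cInf_eq_minimum)
  fix n
  assume "n \<in> range (\<lambda>\<theta>. zero_one_loss S (f \<theta>))"
  then obtain \<theta> where n: "n = zero_one_loss S (f \<theta>)"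
    by blast
  have bounded: "set (losses loss S (f \<theta>')) \<subseteq> {0..M}" for \<theta>'
    using nonneg M_bound unfolding losses_def by fastforce
  show "zero_one_loss S (f \<theta>h) \<le> n"
  proof (rule ccontr)
    assume "\<not> zero_one_loss S (f \<theta>h) \<le> n"
    then have "close_k_loss 1 T M (losses loss S (f \<theta>)) < close_k_loss 1 T M (losses loss S (f \<theta>h))"
      using close_1_loss_less_if_fewer_misclassified[OF _ bounded bounded]
        length_filter_losses_eq_zero_one_loss[OF labels threshold]
      by (simp add: n losses_def)
    with argmin show False
      by (meson not_le)
  qed
qed simp

end
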